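(* Let $n\ge2$, $\omega\in\mathbb{R}^n$, $k\in\mathbb{R}_{>0}^n$ satisfy (IC1) $\sum_\mu\omega_\mu=0$, (IC2) $\omega\ne0$, (IC3) $\left|\frac{\omega_1}{k_1}\right|\le\cdots\le\left|\frac{\omega_n}{k_n}\right|$. Let $\sigma\in\{-1,+1\}^n$, $\sigma_+=\{\mu:\sigma_\mu=+1\}$, and $f_\sigma(R)=-R+\frac1n\sum_{\mu=1}^n\sigma_\mu\sqrt{k_\mu^2R-\omega_\mu^2}$. Then every positive root of $f_\sigma$ lies in the interval $$\left[\left(\frac{\omega_n}{k_n}\right)^2,\ \left(\frac1n\sum_{\mu\in\sigma_+}k_\mu\right)^2\right].$$
   Context: Square roots are nonnegative real square roots; a positive root of $f_\sigma$ is a real $R>0$ with $k_\mu^2R-\omega_\mu^2\ge0$ for all $\mu$ and $f_\sigma(R)=0$. *)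

theory Defs
  imports Complex_Main
begin

definition f_sigma :: "nat \<Rightarrow> (nat \<Rightarrow> real) \<Rightarrow> (nat \<Rightarrow> real) \<Rightarrow> (nat \<Rightarrow> int) \<Rightarrow> real \<Rightarrow> real" where
  "f_sigma n \<omega> k \<sigma> R = - R + (1 / real n) * (\<Sum>\<mu>=1..n. of_int (\<sigma> \<mu>) * sqrt ((k \<mu>)\<^sup>2 * R - (\<omega> \<mu>)\<^sup>2))"

definition positive_root :: "nat \<Rightarrow> (nat \<Rightarrow> real) \<Rightarrow> (nat \<Rightarrow> real) \<Rightarrow> (nat \<Rightarrow> int) \<Rightarrow> real \<Rightarrow> bool" where
  "positive_root n \<omega> k \<sigma> R \<longleftrightarrow> R > 0 \<and> (\<forall>\<mu>\<in>{1..n}. (k \<mu>)\<^sup>2 * R - (\<omega> \<mu>)\<^sup>2 \<ge> 0) \<and> f_sigma n \<omega> k \<sigma> R = 0"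

end

theory Submission
  imports Defs
begin

text \<open>At a root, R is the average of the signed square roots. A term with sign -1
  contributes at most 0 and a term with sign +1 at most k(mu) sqrt R, so
  R \<le> S sqrt R with S = (1/n) times the sum of k over the positive signs, i.e.
  sqrt R \<le> S. The lower bound is nonnegativity of the radicand for mu = n.
  Neither bound uses IC1--IC3; IC3 only makes mu = n the best lower bound of
  this kind.\<close>

lemma sqrt_diff_square_le:
  fixes a b R :: real
  assumes "a \<ge> 0"
  shows "sqrt (a\<^sup>2 * R - b\<^sup>2) \<le> a * sqrt R"
proof -
  have "sqrt (a\<^sup>2 * R - b\<^sup>2) \<le> sqrt (a\<^sup>2 * R)" by (rule real_sqrt_le_mono) simp
  also have "\<dots> = a * sqrt R" using assms by (simp add: real_sqrt_mult)
  finally show ?thesis .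
qed

lemma sum_signed_le_sum_positive:
  fixes x b :: "'a \<Rightarrow> real" and s :: "'a \<Rightarrow> int"
  assumes "finite A"
    and "\<And>i. i \<in> A \<Longrightarrow> s i \<in> {-1, 1}"
    and "\<And>i. i \<in> A \<Longrightarrow> 0 \<le> x i"
    and "\<And>i. i \<in> A \<Longrightarrow> x i \<le> b i"
  shows "(\<Sum>i\<in>A. of_int (s i) * x i) \<le> (\<Sum>i\<in>{i\<in>A. s i = 1}. b i)"
proof -
  have "(\<Sum>i\<in>A. of_int (s i) * x i) \<le> (\<Sum>i\<in>A. if s i = 1 then b i else 0)"
  proof (rule sum_mono)
    fix i assume "i \<in> A"
    then show "of_int (s i) * x i \<le> (if s i = 1 then b i else 0)"
      using assms(2-4)[of i] by auto
  qed
  also have "\<dots> = (\<Sum>i\<in>{i\<in>A. s i = 1}. b i)"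
    using assms(1) by (simp add: sum.inter_filter)
  finally show ?thesis .
qed

lemma le_square_if_le_sqrt_mult:
  fixes R S :: real
  assumes "0 \<le> R" and "R \<le> sqrt R * S"
  shows "R \<le> S\<^sup>2"
proof (cases "R = 0")
  case False
  with assms have "sqrt R * sqrt R \<le> sqrt R * S" by simp
  moreover have "sqrt R > 0" using False assms(1) by simp
  ultimately have "sqrt R \<le> S" by (rule mult_left_le_imp_le)
  with assms(1) have "(sqrt R)\<^sup>2 \<le> S\<^sup>2" by (intro power_mono) auto
  with assms(1) show ?thesis by simp
qed simp

lemma positive_root_lower_bound:
  assumes "positive_root n \<omega> k \<sigma> R" and "\<mu> \<in> {1..n}" and "k \<mu> > 0"
  shows "(\<omega> \<mu> / k \<mu>)\<^sup>2 \<le> R"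
proof -
  have "(\<omega> \<mu>)\<^sup>2 \<le> (k \<mu>)\<^sup>2 * R" using assms(1,2) unfolding positive_root_def by auto
  with assms(3) show ?thesis by (simp add: power_divide divide_le_eq mult.commute)
qed

lemma positive_root_upper_bound:
  assumes "positive_root n \<omega> k \<sigma> R"
    and "\<forall>\<mu>\<in>{1..n}. k \<mu> > 0"
    and "\<forall>\<mu>\<in>{1..n}. \<sigma> \<mu> \<in> {-1, 1}"
  shows "R \<le> ((1 / real n) * (\<Sum>\<mu>\<in>{\<mu>\<in>{1..n}. \<sigma> \<mu> = 1}. k \<mu>))\<^sup>2"
proof (rule le_square_if_le_sqrt_mult)
  have R: "R > 0" and radicand: "\<forall>\<mu>\<in>{1..n}. (k \<mu>)\<^sup>2 * R - (\<omega> \<mu>)\<^sup>2 \<ge> 0"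
    and f0: "f_sigma n \<omega> k \<sigma> R = 0"
    using assms(1) unfolding positive_root_def by auto
  then show "0 \<le> R" by simp
  have "R = (1 / real n) * (\<Sum>\<mu>=1..n. of_int (\<sigma> \<mu>) * sqrt ((k \<mu>)\<^sup>2 * R - (\<omega> \<mu>)\<^sup>2))"
    using f0 unfolding f_sigma_def by simp
  also have "\<dots> \<le> (1 / real n) * (\<Sum>\<mu>\<in>{\<mu>\<in>{1..n}. \<sigma> \<mu> = 1}. k \<mu> * sqrt R)"
    using assms(2,3) radicand
    by (intro mult_left_mono sum_signed_le_sum_positive sqrt_diff_square_le)
       (auto intro: less_imp_le)
  also have "\<dots> = sqrt R * ((1 / real n) * (\<Sum>\<mu>\<in>{\<mu>\<in>{1..n}. \<sigma> \<mu> = 1}. k \<mu>))"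
    by (simp add: sum_distrib_left mult.commute)
  finally show "R \<le> sqrt R * ((1 / real n) * (\<Sum>\<mu>\<in>{\<mu>\<in>{1..n}. \<sigma> \<mu> = 1}. k \<mu>))" .
qed

theorem proposition1:
  fixes n :: nat and \<omega> k :: "nat \<Rightarrow> real" and \<sigma> :: "nat \<Rightarrow> int" and R :: real
  assumes n2: "n \<ge> 2"
    and kpos: "\<forall>\<mu>\<in>{1..n}. k \<mu> > 0"
    and IC1: "(\<Sum>\<mu>=1..n. \<omega> \<mu>) = 0"
    and IC2: "\<exists>\<mu>\<in>{1..n}. \<omega> \<mu> \<noteq> 0"
    and IC3: "\<forall>\<mu>\<in>{1..n}. \<forall>\<nu>\<in>{1..n}. \<mu> \<le> \<nu> \<longrightarrow> \<bar>\<omega> \<mu> / k \<mu>\<bar> \<le> \<bar>\<omega> \<nu> / k \<nu>\<bar>"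
    and sig: "\<forall>\<mu>\<in>{1..n}. \<sigma> \<mu> \<in> {-1, 1}"
    and root: "positive_root n \<omega> k \<sigma> R"
  shows "(\<omega> n / k n)\<^sup>2 \<le> R \<and> R \<le> ((1 / real n) * (\<Sum>\<mu>\<in>{\<mu>\<in>{1..n}. \<sigma> \<mu> = 1}. k \<mu>))\<^sup>2"
proof
  have "n \<in> {1..n}" using n2 by simp
  then show "(\<omega> n / k n)\<^sup>2 \<le> R"
    using root kpos by (intro positive_root_lower_bound) auto
  show "R \<le> ((1 / real n) * (\<Sum>\<mu>\<in>{\<mu>\<in>{1..n}. \<sigma> \<mu> = 1}. k \<mu>))\<^sup>2"
    using root kpos sig by (rule positive_root_upper_bound)
qed

end
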